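(* For every $n\ge 0$, if $B_n$ is the Boolean lattice of subsets of an $n$-element set, then $\mathcal{M}(B_n,t)=(t+1)^n(t-1)^{2n}$.
   Context: $B_n$ is ranked by cardinality, $\mathrm{rk}(B_n)=n$, and $\rho(x,y,z)=3n-\mathrm{rk}(x)-\mathrm{rk}(y)-\mathrm{rk}(z)$. Let $\delta_3(x,y,z)=1$ if $x=y=z$ and $0$ otherwise, and $J$ the unique integer-valued function on triples $x\le y\le z$ with $\sum_{x\le a\le y\le b\le z}J(a,y,b)=\delta_3(x,y,z)$ for all $x\le y\le z$. Then $\mathcal{M}(B_n,t)=\sum_{x\le y\le z}J(x,y,z)\,t^{\rho(x,y,z)}$. *)

theory Defs
  imports "HOL-Computational_Algebra.Polynomial"
begin

text \<open>The Boolean lattice B_n: subsets of the n-element set {0..<n}, ordered by inclusion,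
  ranked by cardinality.\<close>
definition Bn :: "nat \<Rightarrow> nat set set" where
  "Bn n = Pow {..<n}"

definition chains3 :: "nat \<Rightarrow> (nat set \<times> nat set \<times> nat set) set" where
  "chains3 n = {(x, y, z). x \<in> Bn n \<and> y \<in> Bn n \<and> z \<in> Bn n \<and> x \<subseteq> y \<and> y \<subseteq> z}"

definition delta3 :: "'a \<Rightarrow> 'a \<Rightarrow> 'a \<Rightarrow> int" where
  "delta3 x y z = (if x = y \<and> y = z then 1 else 0)"

text \<open>J is a function on triples x \<le> y \<le> z only; to make it a unique total HOL function
  we normalise it to 0 off such triples.\<close>
definition J_cond :: "nat \<Rightarrow> (nat set \<Rightarrow> nat set \<Rightarrow> nat set \<Rightarrow> int) \<Rightarrow> bool" where
  "J_cond n J \<longleftrightarrow>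
     (\<forall>(x, y, z) \<in> chains3 n.
        (\<Sum>(a, b) \<in> {(a, b). a \<in> Bn n \<and> b \<in> Bn n \<and> x \<subseteq> a \<and> a \<subseteq> y \<and> y \<subseteq> b \<and> b \<subseteq> z}.
            J a y b) = delta3 x y z) \<and>
     (\<forall>x y z. (x, y, z) \<notin> chains3 n \<longrightarrow> J x y z = 0)"

definition J_Bn :: "nat \<Rightarrow> nat set \<Rightarrow> nat set \<Rightarrow> nat set \<Rightarrow> int" where
  "J_Bn n = (THE J. J_cond n J)"

definition rho_Bn :: "nat \<Rightarrow> nat set \<Rightarrow> nat set \<Rightarrow> nat set \<Rightarrow> nat" where
  "rho_Bn n x y z = 3 * n - card x - card y - card z"

definition M_Bn :: "nat \<Rightarrow> int poly" where
  "M_Bn n = (\<Sum>(x, y, z) \<in> chains3 n. smult (J_Bn n x y z) (monom 1 (rho_Bn n x y z)))"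

end

theory Submission
  imports Defs "HOL-Library.FuncSet"
begin

text \<open>
  On multichains, \<open>J(x, y, z) = (-1)^(|x| + |z|)\<close>: with this choice the defining sum factors
  into two alternating sums over the intervals \<open>[x, y]\<close> and \<open>[y, z]\<close> of the Boolean lattice,
  and such a sum vanishes unless its interval is a single point. A multichain
  \<open>x \<subseteq> y \<subseteq> z \<subseteq> {..<n}\<close> is the same as a map sending each \<open>i < n\<close> to the number
  \<open>k \<in> {0..3}\<close> of sets containing it; both the sign \<open>|x| + |z|\<close> and \<open>\<rho>\<close> are additive over
  the points \<open>i\<close>, so \<open>\<M>(B_n, t)\<close> is the \<open>n\<close>-th power of
  \<open>t^3 - t^2 - t + 1 = (t + 1)(t - 1)^2\<close>.
\<close>

lemma sum_neg_one_power_card_subsupersets: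
  assumes "finite S" "U \<subseteq> S"
  shows "(\<Sum>T | T \<subseteq> S \<and> U \<subseteq> T. (-1::'a::ring_1) ^ card T)
    = (if U = S then (-1) ^ card S else 0)"
proof (cases "U = S")
  case True
  then have "{T. T \<subseteq> S \<and> U \<subseteq> T} = {S}" by blast
  with True show ?thesis by simp
next
  case False
  with assms have "U \<subset> S" by blast
  with \<open>finite S\<close> have "card {T. T \<subseteq> S \<and> U \<subseteq> T \<and> even (card T)}
      = card {T. T \<subseteq> S \<and> U \<subseteq> T \<and> odd (card T)}"
    by (rule card_subsupersets_even_odd)
  moreover have "finite {T. T \<subseteq> S \<and> U \<subseteq> T}"
    using \<open>finite S\<close> by (simp add: finite_Collect_conjI)
  ultimately have "(\<Sum>T | T \<subseteq> S \<and> U \<subseteq> T. (-1::'a) ^ card T) = 0"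
    by - (rule sum_alternating_cancels, simp_all add: conj_assoc)
  with False show ?thesis by simp
qed

lemma prod_monom: "(\<Prod>i\<in>A. monom (c i) (d i)) = monom (\<Prod>i\<in>A. c i) (\<Sum>i\<in>A. d i)"
  by (induction A rule: infinite_finite_induct) (simp_all add: mult_monom)

lemma card_diff_less_of_subinterval:
  assumes "finite b" "a \<subseteq> a'" "a' \<subseteq> b'" "b' \<subseteq> b" "(a', b') \<noteq> (a, b)"
  shows "card b' - card a' < card b - card a"
proof -
  have "finite b'" using assms(1,4) by (rule finite_subset[rotated])
  moreover have "finite a'" using assms(3) \<open>finite b'\<close> by (rule finite_subset)
  ultimately have "card a \<le> card a'" "card a' \<le> card b'" "card b' \<le> card b"
    using assms by (simp_all add: card_mono)
  moreover have "a \<subset> a' \<or> b' \<subset> b" using assms by blast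
  then have "card a < card a' \<or> card b' < card b"
    using \<open>finite a'\<close> \<open>finite b\<close> psubset_card_mono by blast
  ultimately show ?thesis by linarith
qed

definition straddling_pairs ::
    "nat \<Rightarrow> nat set \<Rightarrow> nat set \<Rightarrow> nat set \<Rightarrow> (nat set \<times> nat set) set" where
  "straddling_pairs n x y z = {(a, b). a \<in> Bn n \<and> b \<in> Bn n \<and> x \<subseteq> a \<and> a \<subseteq> y \<and> y \<subseteq> b \<and> b \<subseteq> z}"

lemma J_cond_iff:
  "J_cond n J \<longleftrightarrow>
     (\<forall>(x, y, z) \<in> chains3 n. (\<Sum>(a, b) \<in> straddling_pairs n x y z. J a y b) = delta3 x y z) \<and>
     (\<forall>x y z. (x, y, z) \<notin> chains3 n \<longrightarrow> J x y z = 0)"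
  unfolding J_cond_def straddling_pairs_def ..

lemma finite_Bn: "a \<in> Bn n \<Longrightarrow> finite a"
  unfolding Bn_def by (auto intro: finite_subset)

lemma finite_straddling_pairs: "finite (straddling_pairs n x y z)"
  by (rule finite_subset[of _ "Bn n \<times> Bn n"]) (auto simp: straddling_pairs_def Bn_def)

lemma straddling_pairs_eq_Times:
  assumes "(x, y, z) \<in> chains3 n"
  shows "straddling_pairs n x y z = {a. a \<subseteq> y \<and> x \<subseteq> a} \<times> {b. b \<subseteq> z \<and> y \<subseteq> b}"
  using assms by (auto simp: straddling_pairs_def chains3_def Bn_def)

lemma straddling_pairs_chains3: "(a, b) \<in> straddling_pairs n x y z \<Longrightarrow> (a, y, b) \<in> chains3 n"
  by (auto simp: straddling_pairs_def chains3_def Bn_def)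

lemma J_cond_recursion:
  assumes "J_cond n J" "(a, y, b) \<in> chains3 n"
  shows "J a y b = delta3 a y b - (\<Sum>(a', b') \<in> straddling_pairs n a y b - {(a, b)}. J a' y b')"
proof -
  have "(a, b) \<in> straddling_pairs n a y b"
    using assms(2) by (auto simp: straddling_pairs_def chains3_def)
  with assms show ?thesis
    using sum.remove[OF finite_straddling_pairs, of "(a, b)" n a y b "\<lambda>(a', b'). J a' y b'"]
    by (auto simp: J_cond_iff)
qed

lemma J_cond_unique:
  assumes J: "J_cond n J" and J': "J_cond n J'"
  shows "J = J'"
proof -
  have "J a y b = J' a y b" if "(a, y, b) \<in> chains3 n" for a y b
    using that
  proof (induction "card b - card a" arbitrary: a b rule: less_induct)
    case less
    have "J a' y b' = J' a' y b'" if "(a', b') \<in> straddling_pairs n a y b - {(a, b)}" for a' b'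
    proof (rule less.hyps)
      from that show "(a', y, b') \<in> chains3 n"
        by (auto intro: straddling_pairs_chains3)
      from that less.prems finite_Bn show "card b' - card a' < card b - card a"
        by (auto simp: straddling_pairs_def chains3_def intro!: card_diff_less_of_subinterval)
    qed
    then have "(\<Sum>(a', b') \<in> straddling_pairs n a y b - {(a, b)}. J a' y b')
        = (\<Sum>(a', b') \<in> straddling_pairs n a y b - {(a, b)}. J' a' y b')"
      by (intro sum.cong refl) fastforce
    then show ?case
      using J_cond_recursion[OF J less.prems] J_cond_recursion[OF J' less.prems] by simp
  qed
  moreover have "J a y b = J' a y b" if "(a, y, b) \<notin> chains3 n" for a y b
    using J J' that by (simp add: J_cond_iff)
  ultimately show ?thesis by (intro ext) blast
qed

definition J_closed :: "nat \<Rightarrow> nat set \<Rightarrow> nat set \<Rightarrow> nat set \<Rightarrow> int" where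
  "J_closed n x y z = (if (x, y, z) \<in> chains3 n then (-1) ^ (card x + card z) else 0)"

lemma sum_J_closed_straddling_pairs:
  assumes "(x, y, z) \<in> chains3 n"
  shows "(\<Sum>(a, b) \<in> straddling_pairs n x y z. J_closed n a y b) = delta3 x y z"
proof -
  from assms have "x \<subseteq> y" "y \<subseteq> z" "finite z"
    by (auto simp: chains3_def Bn_def intro: finite_subset)
  have "finite y" using \<open>y \<subseteq> z\<close> \<open>finite z\<close> by (rule finite_subset)
  have "(\<Sum>(a, b) \<in> straddling_pairs n x y z. J_closed n a y b)
      = (\<Sum>(a, b) \<in> straddling_pairs n x y z. (-1) ^ card a * (-1) ^ card b)"
    by (intro sum.cong refl) (auto simp: J_closed_def power_add dest: straddling_pairs_chains3)
  also have "\<dots> = (\<Sum>a | a \<subseteq> y \<and> x \<subseteq> a. (-1::int) ^ card a)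
      * (\<Sum>b | b \<subseteq> z \<and> y \<subseteq> b. (-1) ^ card b)"
    by (simp add: straddling_pairs_eq_Times[OF assms] sum_product sum.cartesian_product)
  also have "\<dots> = delta3 x y z"
    using sum_neg_one_power_card_subsupersets[where 'a = int, OF \<open>finite y\<close> \<open>x \<subseteq> y\<close>]
      sum_neg_one_power_card_subsupersets[where 'a = int, OF \<open>finite z\<close> \<open>y \<subseteq> z\<close>]
    by (auto simp: delta3_def simp flip: power_add)
  finally show ?thesis .
qed

lemma J_cond_J_closed: "J_cond n (J_closed n)"
  unfolding J_cond_iff
  by (intro conjI) (auto simp: sum_J_closed_straddling_pairs, simp add: J_closed_def)

lemma J_Bn_eq_J_closed: "J_Bn n = J_closed n"
  unfolding J_Bn_def
proof (rule the_equality)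
  show "J_cond n (J_closed n)" by (rule J_cond_J_closed)
  show "J = J_closed n" if "J_cond n J" for J
    using that J_cond_J_closed by (rule J_cond_unique)
qed

definition superlevel :: "nat \<Rightarrow> (nat \<Rightarrow> nat) \<Rightarrow> nat \<Rightarrow> nat set" where
  "superlevel n f k = {i \<in> {..<n}. k \<le> f i}"

definition chain_of_levels :: "nat \<Rightarrow> (nat \<Rightarrow> nat) \<Rightarrow> nat set \<times> nat set \<times> nat set" where
  "chain_of_levels n f = (superlevel n f 3, superlevel n f 2, superlevel n f 1)"

definition levels_of_chain :: "nat \<Rightarrow> nat set \<times> nat set \<times> nat set \<Rightarrow> nat \<Rightarrow> nat" where
  "levels_of_chain n = (\<lambda>(x, y, z).
     restrict (\<lambda>i. if i \<in> x then 3 else if i \<in> y then 2 else if i \<in> z then 1 else 0) {..<n})"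

lemma superlevel_antimono: "k \<le> l \<Longrightarrow> superlevel n f l \<subseteq> superlevel n f k"
  by (auto simp: superlevel_def)

lemma superlevel_in_Bn: "superlevel n f k \<in> Bn n"
  by (auto simp: superlevel_def Bn_def)

lemma chain_of_levels_in_chains3: "chain_of_levels n f \<in> chains3 n"
  by (simp add: chain_of_levels_def chains3_def superlevel_antimono superlevel_in_Bn)

lemma levels_of_chain_in_PiE: "levels_of_chain n t \<in> PiE {..<n} (\<lambda>_. {0..3})"
  by (cases t) (simp add: levels_of_chain_def restrict_PiE_iff)

lemma levels_of_chain_of_levels:
  assumes f: "f \<in> PiE {..<n} (\<lambda>_. {0..3})"
  shows "levels_of_chain n (chain_of_levels n f) = f"
proof (rule PiE_ext[OF levels_of_chain_in_PiE f])
  fix i assume i: "i \<in> {..<n}"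
  have "f i \<le> 3" using PiE_mem[OF f i] by simp
  with i show "levels_of_chain n (chain_of_levels n f) i = f i"
    by (simp add: levels_of_chain_def chain_of_levels_def superlevel_def)
qed

lemma chain_of_levels_of_chain:
  assumes "t \<in> chains3 n"
  shows "chain_of_levels n (levels_of_chain n t) = t"
proof -
  obtain x y z where t: "t = (x, y, z)" by (cases t)
  with assms have "x \<subseteq> y" "y \<subseteq> z" "z \<subseteq> {..<n}" by (auto simp: chains3_def Bn_def)
  then show ?thesis
    unfolding t levels_of_chain_def chain_of_levels_def superlevel_def by auto
qed

lemma bij_betw_chain_of_levels:
  "bij_betw (chain_of_levels n) (PiE {..<n} (\<lambda>_. {0..3})) (chains3 n)"
  by (rule bij_betw_byWitness[where f' = "levels_of_chain n"])
    (use levels_of_chain_of_levels chain_of_levels_of_chain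
      chain_of_levels_in_chains3 levels_of_chain_in_PiE in blast)+

lemma sum_of_bool_levels:
  assumes "k \<le> 3"
  shows "of_bool (3 \<le> k) + of_bool (2 \<le> k) + of_bool (1 \<le> k) = (k::nat)"
proof -
  from assms have "k \<in> {0, 1, 2, 3}" by auto
  then show ?thesis by auto
qed

lemma card_superlevel: "card (superlevel n f k) = (\<Sum>i<n. of_bool (k \<le> f i))"
  by (simp add: superlevel_def Int_def)

text \<open>A point of level \<open>k\<close> lies in \<open>x\<close> iff \<open>k = 3\<close> and in \<open>z\<close> iff \<open>k \<ge> 1\<close>,
  and contributes \<open>3 - k\<close> to \<open>\<rho>\<close>.\<close>

definition level_weight :: "nat \<Rightarrow> int poly" where
  "level_weight k = monom ((-1) ^ (of_bool (3 \<le> k) + of_bool (1 \<le> k))) (3 - k)"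

lemma weight_chain_of_levels:
  assumes f: "f \<in> PiE {..<n} (\<lambda>_. {0..3})"
  shows "(case chain_of_levels n f of (x, y, z) \<Rightarrow> smult (J_closed n x y z) (monom 1 (rho_Bn n x y z)))
    = (\<Prod>i<n. level_weight (f i))"
proof -
  let ?x = "superlevel n f 3" and ?y = "superlevel n f 2" and ?z = "superlevel n f 1"
  have le3: "f i \<le> 3" if "i \<in> {..<n}" for i
    using PiE_mem[OF f that] by simp
  have sign: "card ?x + card ?z = (\<Sum>i<n. of_bool (3 \<le> f i) + of_bool (1 \<le> f i))"
    unfolding card_superlevel by (rule sum.distrib[symmetric])
  have "card ?x + card ?y + card ?z
      = (\<Sum>i<n. of_bool (3 \<le> f i) + of_bool (2 \<le> f i) + of_bool (1 \<le> f i))"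
    unfolding card_superlevel by (simp only: sum.distrib)
  also have "\<dots> = (\<Sum>i<n. f i)"
    by (rule sum.cong[OF refl], rule sum_of_bool_levels, erule le3)
  finally have "card ?x + card ?y + card ?z = (\<Sum>i<n. f i)" .
  moreover have "(\<Sum>i<n. 3 - f i) = (\<Sum>i<n. 3) - (\<Sum>i<n. f i)"
    using le3 by (rule sum_subtractf_nat)
  ultimately have rho: "rho_Bn n ?x ?y ?z = (\<Sum>i<n. 3 - f i)"
    by (simp add: rho_Bn_def)
  have J: "J_closed n ?x ?y ?z = (-1) ^ (card ?x + card ?z)"
    using chain_of_levels_in_chains3[of n f] by (simp add: J_closed_def chain_of_levels_def)
  have "(case chain_of_levels n f of (x, y, z) \<Rightarrow> smult (J_closed n x y z) (monom 1 (rho_Bn n x y z)))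
      = monom ((-1) ^ (\<Sum>i<n. of_bool (3 \<le> f i) + of_bool (1 \<le> f i))) (\<Sum>i<n. 3 - f i)"
    unfolding chain_of_levels_def prod.case J smult_monom sign rho by simp
  also have "\<dots> = (\<Prod>i<n. level_weight (f i))"
    by (simp add: level_weight_def prod_monom power_sum)
  finally show ?thesis .
qed

lemma sum_level_weight: "(\<Sum>k \<in> {0..3}. level_weight k) = [:1, 1:] * [:-1, 1:] ^ 2"
  by (simp add: level_weight_def numeral_eq_Suc atLeastAtMostSuc_conv monom_altdef)

theorem proposition6p8:
  fixes n :: nat
  shows "M_Bn n = [:1, 1:] ^ n * [:-1, 1:] ^ (2 * n)"
proof -
  have "M_Bn n = (\<Sum>f \<in> PiE {..<n} (\<lambda>_. {0..3}).
      case chain_of_levels n f of (x, y, z) \<Rightarrow> smult (J_closed n x y z) (monom 1 (rho_Bn n x y z)))"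
    unfolding M_Bn_def J_Bn_eq_J_closed
    by (rule sum.reindex_bij_betw[OF bij_betw_chain_of_levels, symmetric])
  also have "\<dots> = (\<Sum>f \<in> PiE {..<n} (\<lambda>_. {0..3}). \<Prod>i<n. level_weight (f i))"
    by (intro sum.cong refl weight_chain_of_levels)
  also have "\<dots> = (\<Prod>i<n. \<Sum>k \<in> {0..3}. level_weight k)"
    by (rule prod_sum_PiE[symmetric]) auto
  also have "\<dots> = [:1, 1:] ^ n * [:-1, 1:] ^ (2 * n)"
    by (simp only: sum_level_weight prod_constant card_lessThan power_mult_distrib power_mult)
  finally show ?thesis .
qed

end
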